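(* For $p\in(0,1)$ and $y\in(0,1)$ let $$I(y)=\log(y)\log\!\left(\frac{\log p}{\log y}\right)+\log\!\left(\frac yp\right),\qquad \mathcal{I}(y)=y\log\!\left(\frac yp\right)+(1-y)\log\!\left(\frac{1-y}{1-p}\right).$$ Then for all $p,y\in(0,1)$, $I(y)\ge\mathcal{I}(y)$, with equality if and only if $y=p$.
   Context: $\mathcal{I}$ is the Cramér rate function of the empirical mean of i.i.d. Bernoulli($p$) variables; $I$ is the rate function of the Adaptive Multilevel Splitting estimator. *)

theory Defs
  imports Complex_Main
begin

definition AMS_rate :: "real \<Rightarrow> real \<Rightarrow> real" where
  "AMS_rate p y = ln y * ln (ln p / ln y) + ln (y / p)"

text \<open>Cramer rate function of the empirical mean of iid Bernoulli(p) variables.\<close>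
definition cramer_rate :: "real \<Rightarrow> real \<Rightarrow> real" where
  "cramer_rate p y = y * ln (y / p) + (1 - y) * ln ((1 - y) / (1 - p))"

end

theory Submission
  imports Defs
begin

text \<open>Put \<open>a = -ln p\<close> and \<open>b = -ln y\<close>. Multiplied by \<open>1 - y\<close>, the difference of the two rate
  functions is the gap between the strictly convex function \<open>G s = ln (exp (exp s) - 1)\<close> at
  \<open>ln a\<close> and its tangent line at \<open>ln b\<close>. This gap is positive unless \<open>a = b\<close>, i.e. \<open>y = p\<close>.\<close>

lemma tangent_line_less_of_strict_mono_deriv:
  fixes f f' :: "real \<Rightarrow> real"
  assumes deriv: "\<And>x. (f has_real_derivative f' x) (at x)"
    and mono: "strict_mono f'"
    and "r \<noteq> s"
  shows "f s + f' s * (r - s) < f r"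
proof (cases "r < s")
  case True
  obtain z where z: "r < z" "z < s" "f s - f r = (s - r) * f' z"
    using MVT2[OF True, of f f'] deriv by blast
  have "(s - r) * f' z < (s - r) * f' s"
    using True z mono by (simp add: strict_mono_less)
  with z show ?thesis by (simp add: algebra_simps)
next
  case False
  with \<open>r \<noteq> s\<close> have "s < r" by simp
  then obtain z where z: "s < z" "z < r" "f r - f s = (r - s) * f' z"
    using MVT2[of s r f f'] deriv by blast
  have "(r - s) * f' s < (r - s) * f' z"
    using \<open>s < r\<close> z mono by (simp add: strict_mono_less)
  with z show ?thesis by (simp add: algebra_simps)
qed

lemma divide_one_minus_exp_neg_strict_mono_on:
  "strict_mono_on {0<..} (\<lambda>x::real. x / (1 - exp (- x)))"
proof (rule strict_mono_onI)
  fix x z :: real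
  assume "x \<in> {0<..}" "z \<in> {0<..}" "x < z"
  have "(\<lambda>x. x / (1 - exp (- x))) x < (\<lambda>x. x / (1 - exp (- x))) z"
  proof (rule DERIV_pos_imp_increasing[OF \<open>x < z\<close>], intro exI conjI)
    fix t assume "x \<le> t" "t \<le> z"
    with \<open>x \<in> {0<..}\<close> have "0 < t" by simp
    then have e: "exp (- t) < 1" by simp
    show "((\<lambda>x. x / (1 - exp (- x))) has_real_derivative
        ((1 - exp (- t)) - t * exp (- t)) / (1 - exp (- t))\<^sup>2) (at t)"
      using e by (auto intro!: derivative_eq_intros simp: power2_eq_square field_simps)
    have "(t + 1) * exp (- t) < 1"
      using exp_minus_greater[of "- t"] \<open>0 < t\<close> by (simp add: exp_minus field_simps)
    with e show "0 < ((1 - exp (- t)) - t * exp (- t)) / (1 - exp (- t))\<^sup>2"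
      by (simp add: algebra_simps)
  qed
  then show "x / (1 - exp (- x)) < z / (1 - exp (- z))" by simp
qed

definition ln_exp_exp_minus_one :: "real \<Rightarrow> real" where
  "ln_exp_exp_minus_one s = ln (exp (exp s) - 1)"

definition ln_exp_exp_minus_one_deriv :: "real \<Rightarrow> real" where
  "ln_exp_exp_minus_one_deriv s = exp s / (1 - exp (- exp s))"

lemma has_real_derivative_ln_exp_exp_minus_one:
  "(ln_exp_exp_minus_one has_real_derivative ln_exp_exp_minus_one_deriv s) (at s)"
proof -
  have pos: "0 < exp (exp s) - 1" by simp
  have "(ln_exp_exp_minus_one has_real_derivative exp (exp s) * exp s / (exp (exp s) - 1)) (at s)"
    unfolding ln_exp_exp_minus_one_def using pos by (auto intro!: derivative_eq_intros)
  moreover have "exp (exp s) * exp s / (exp (exp s) - 1) = ln_exp_exp_minus_one_deriv s"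
  proof -
    have "exp (exp s) * (1 - exp (- exp s)) = exp (exp s) - 1"
      by (simp add: algebra_simps exp_minus)
    moreover have "0 < 1 - exp (- exp s)" by simp
    ultimately show ?thesis
      unfolding ln_exp_exp_minus_one_deriv_def using pos by (simp add: field_simps)
  qed
  ultimately show ?thesis by simp
qed

lemma strict_mono_ln_exp_exp_minus_one_deriv: "strict_mono ln_exp_exp_minus_one_deriv"
proof (rule strict_monoI)
  fix r s :: real
  assume "r < s"
  then show "ln_exp_exp_minus_one_deriv r < ln_exp_exp_minus_one_deriv s"
    using divide_one_minus_exp_neg_strict_mono_on
    unfolding ln_exp_exp_minus_one_deriv_def by (simp add: strict_mono_on_def)
qed

lemma AMS_rate_minus_cramer_rate:
  fixes p y :: real
  assumes "0 < p" "p < 1" "0 < y" "y < 1"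
  defines "a \<equiv> - ln p" and "b \<equiv> - ln y"
  shows "AMS_rate p y - cramer_rate p y =
    (1 - y) * (ln_exp_exp_minus_one (ln a) - ln_exp_exp_minus_one (ln b)
               - ln_exp_exp_minus_one_deriv (ln b) * (ln a - ln b))"
proof -
  have "0 < a" "0 < b" using assms by (simp_all add: a_def b_def)
  have G_a: "ln_exp_exp_minus_one (ln a) = ln (1 - p) + a"
  proof -
    have "exp (exp (ln a)) - 1 = (1 - p) / p"
      using \<open>0 < a\<close> assms by (simp add: a_def exp_minus field_simps)
    then show ?thesis
      unfolding ln_exp_exp_minus_one_def using assms by (simp add: ln_div a_def)
  qed
  have G_b: "ln_exp_exp_minus_one (ln b) = ln (1 - y) + b"
  proof -
    have "exp (exp (ln b)) - 1 = (1 - y) / y"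
      using \<open>0 < b\<close> assms by (simp add: b_def exp_minus field_simps)
    then show ?thesis
      unfolding ln_exp_exp_minus_one_def using assms by (simp add: ln_div b_def)
  qed
  have G'_b: "(1 - y) * ln_exp_exp_minus_one_deriv (ln b) = b"
    using \<open>0 < b\<close> assms unfolding ln_exp_exp_minus_one_deriv_def by (simp add: b_def)
  have "ln p / ln y = a / b" by (simp add: a_def b_def)
  then have "ln (ln p / ln y) = ln a - ln b"
    using \<open>0 < a\<close> \<open>0 < b\<close> by (simp add: ln_div)
  then have "AMS_rate p y = - b * (ln a - ln b) - b + a"
    unfolding AMS_rate_def using assms(1-4) by (simp add: ln_div a_def b_def)
  moreover have "cramer_rate p y = y * (a - b) + (1 - y) * (ln (1 - y) - ln (1 - p))"
    unfolding cramer_rate_def using assms(1-4) by (simp add: ln_div a_def b_def algebra_simps)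
  ultimately have "AMS_rate p y - cramer_rate p y
      = (1 - y) * (ln (1 - p) + a - (ln (1 - y) + b)) - b * (ln a - ln b)"
    by (simp add: algebra_simps)
  also have "\<dots> = (1 - y) * (ln_exp_exp_minus_one (ln a) - ln_exp_exp_minus_one (ln b))
      - (1 - y) * ln_exp_exp_minus_one_deriv (ln b) * (ln a - ln b)"
    unfolding G_a G_b G'_b ..
  also have "\<dots> = (1 - y) * (ln_exp_exp_minus_one (ln a) - ln_exp_exp_minus_one (ln b)
               - ln_exp_exp_minus_one_deriv (ln b) * (ln a - ln b))"
    by (simp add: algebra_simps)
  finally show ?thesis .
qed

theorem proposition6p1:
  fixes p y :: real
  assumes "0 < p" "p < 1" "0 < y" "y < 1"
  shows "AMS_rate p y \<ge> cramer_rate p y \<and> (AMS_rate p y = cramer_rate p y \<longleftrightarrow> y = p)"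
proof (cases "y = p")
  case True
  with AMS_rate_minus_cramer_rate[OF assms] show ?thesis by simp
next
  case False
  have "- ln p \<noteq> - ln y"
    using False assms by simp
  then have "ln (- ln p) \<noteq> ln (- ln y)"
    using assms by simp
  then have "0 < ln_exp_exp_minus_one (ln (- ln p)) - ln_exp_exp_minus_one (ln (- ln y))
               - ln_exp_exp_minus_one_deriv (ln (- ln y)) * (ln (- ln p) - ln (- ln y))"
    using tangent_line_less_of_strict_mono_deriv[OF has_real_derivative_ln_exp_exp_minus_one
        strict_mono_ln_exp_exp_minus_one_deriv] by (simp add: algebra_simps)
  then have "0 < AMS_rate p y - cramer_rate p y"
    unfolding AMS_rate_minus_cramer_rate[OF assms] using \<open>y < 1\<close> by simp
  with False show ?thesis by simp
qed

end
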